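(* Let $f\colon[0,\infty)\to[0,\infty)$ be an unbounded modulus, let $(X,\rho)$ be a metric space, let $A\in CL(X)$ and let $(A_k)\subset CL(X)$ be such that $(A_k)$ is $f$-Wijsman statistically convergent to $A$. Then $(A_k)$ is Wijsman statistically convergent to $A$.
   Context: A modulus is a function $f\colon[0,\infty)\to[0,\infty)$ such that $f(x)=0$ iff $x=0$, $f(x+y)\le f(x)+f(y)$ for all $x,y\ge 0$, $f$ is increasing, and $f$ is continuous. $CL(X)$ denotes the set of all non-empty closed subsets of $(X,\rho)$, and for $x\in X$ and non-empty $B\subseteq X$, $d(x,B)=\inf_{y\in B}\rho(x,y)$. For $K\subseteq\mathbb N$ the natural density is $d(K)=\lim_{n\to\infty}\frac1n|\{k\le n: k\in K\}|$, and for an unbounded modulus $f$ the $f$-density is $d^f(K)=\lim_{n\to\infty}\frac{f(|\{k\le n:k\in K\}|)}{f(n)}$ (when the limit exists). A real sequence $(x_k)$ is statistically convergent (resp. $f$-statistically convergent) to $l$ if for every $\varepsilon>0$ the set $\{k:|x_k-l|\ge\varepsilon\}$ has natural density $0$ (resp. $f$-density $0$). $(A_k)\subset CL(X)$ is Wijsman statistically convergent (resp. $f$-Wijsman statistically convergent) to $A\in CL(X)$ if for every $x\in X$ the sequence $(d(x,A_k))$ is statistically convergent (resp. $f$-statistically convergent) to $d(x,A)$. *)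

theory Defs
  imports "HOL-Analysis.Analysis"
begin

definition modulus :: "(real \<Rightarrow> real) \<Rightarrow> bool" where
  "modulus f \<longleftrightarrow>
     (\<forall>x\<ge>0. f x \<ge> 0) \<and>
     (\<forall>x\<ge>0. f x = 0 \<longleftrightarrow> x = 0) \<and>
     (\<forall>x\<ge>0. \<forall>y\<ge>0. f (x + y) \<le> f x + f y) \<and>
     mono_on {0..} f \<and>
     continuous_on {0..} f"

definition unbounded_modulus :: "(real \<Rightarrow> real) \<Rightarrow> bool" where
  "unbounded_modulus f \<longleftrightarrow> modulus f \<and> \<not> bdd_above (f ` {0..})"

definition count_upto :: "nat set \<Rightarrow> nat \<Rightarrow> nat" where
  "count_upto K n = card {k \<in> K. 1 \<le> k \<and> k \<le> n}"

definition nat_density_zero :: "nat set \<Rightarrow> bool" where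
  "nat_density_zero K \<longleftrightarrow> ((\<lambda>n. real (count_upto K n) / real n) \<longlonglongrightarrow> 0)"

definition f_density_zero :: "(real \<Rightarrow> real) \<Rightarrow> nat set \<Rightarrow> bool" where
  "f_density_zero f K \<longleftrightarrow> ((\<lambda>n. f (real (count_upto K n)) / f (real n)) \<longlonglongrightarrow> 0)"

definition stat_convergent :: "(nat \<Rightarrow> real) \<Rightarrow> real \<Rightarrow> bool" where
  "stat_convergent x l \<longleftrightarrow> (\<forall>\<epsilon>>0. nat_density_zero {k. \<bar>x k - l\<bar> \<ge> \<epsilon>})"

definition f_stat_convergent :: "(real \<Rightarrow> real) \<Rightarrow> (nat \<Rightarrow> real) \<Rightarrow> real \<Rightarrow> bool" where
  "f_stat_convergent f x l \<longleftrightarrow> (\<forall>\<epsilon>>0. f_density_zero f {k. \<bar>x k - l\<bar> \<ge> \<epsilon>})"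

definition CL :: "'a::metric_space set set" where
  "CL = {B. B \<noteq> {} \<and> closed B}"

definition wijsman_stat_convergent :: "(nat \<Rightarrow> 'a::metric_space set) \<Rightarrow> 'a set \<Rightarrow> bool" where
  "wijsman_stat_convergent As A \<longleftrightarrow>
     (\<forall>x. stat_convergent (\<lambda>k. infdist x (As k)) (infdist x A))"

definition f_wijsman_stat_convergent ::
  "(real \<Rightarrow> real) \<Rightarrow> (nat \<Rightarrow> 'a::metric_space set) \<Rightarrow> 'a set \<Rightarrow> bool" where
  "f_wijsman_stat_convergent f As A \<longleftrightarrow>
     (\<forall>x. f_stat_convergent f (\<lambda>k. infdist x (As k)) (infdist x A))"

end

theory Submission
  imports Defs
begin

text \<open>Subadditivity gives \<open>f (p x) \<le> p f x\<close>. So if \<open>K\<close> has positive upper natural density,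
  i.e. \<open>|K \<inter> [1,n]| \<ge> n/p\<close> for infinitely many \<open>n\<close>, monotonicity gives
  \<open>f n \<le> p f |K \<inter> [1,n]|\<close> for those \<open>n\<close>, so the \<open>f\<close>-density ratio stays above \<open>1/p\<close>.\<close>

lemma modulus_mult_le:
  assumes "modulus f" "x \<ge> 0"
  shows "f (real m * x) \<le> real m * f x"
proof (induction m)
  case 0
  then show ?case using assms unfolding modulus_def by auto
next
  case (Suc m)
  have "f (real (Suc m) * x) = f (real m * x + x)" by (simp add: algebra_simps)
  also have "\<dots> \<le> f (real m * x) + f x"
    using assms unfolding modulus_def by auto
  also have "\<dots> \<le> real (Suc m) * f x" using Suc by (simp add: algebra_simps)
  finally show ?case .
qed

lemma modulus_pos:
  assumes "modulus f" "x > 0"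
  shows "f x > 0"
  using assms unfolding modulus_def by (metis order_less_le)

lemma modulus_le_mult_of_ge_div:
  assumes m: "modulus f" and p: "p > 0" and x: "x \<ge> 0" and y: "x / real p \<le> y"
  shows "f x \<le> real p * f y"
proof -
  have "f x = f (real p * (x / real p))" using p by simp
  also have "\<dots> \<le> real p * f (x / real p)" using x by (intro modulus_mult_le[OF m]) simp
  also have "\<dots> \<le> real p * f y"
  proof (intro mult_left_mono)
    have "0 \<le> x / real p" using x by simp
    with y show "f (x / real p) \<le> f y"
      using m unfolding modulus_def mono_on_def by auto
  qed simp
  finally show ?thesis .
qed

lemma f_density_zero_imp_nat_density_zero:
  assumes m: "modulus f" and fd: "f_density_zero f K"
  shows "nat_density_zero K"
  unfolding nat_density_zero_def
proof (rule order_tendstoI)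
  fix a :: real assume "a < 0"
  then show "\<forall>\<^sub>F n in sequentially. a < real (count_upto K n) / real n"
    by (intro always_eventually) (auto intro: less_le_trans)
next
  fix e :: real assume e: "0 < e"
  obtain q :: nat where "1 / real (Suc q) < e"
    using nat_approx_posE[OF e] .
  then obtain p :: nat where p: "p > 0" "1 / real p < e" by blast
  have "\<forall>\<^sub>F n in sequentially. f (real (count_upto K n)) / f (real n) < 1 / real p"
    using fd p unfolding f_density_zero_def by (intro order_tendstoD(2)) auto
  moreover have "\<forall>\<^sub>F n in sequentially. n \<ge> 1" by (rule eventually_ge_at_top)
  ultimately show "\<forall>\<^sub>F n in sequentially. real (count_upto K n) / real n < e"
  proof eventually_elim
    case (elim n)
    let ?c = "real (count_upto K n)"
    show ?case
    proof (rule ccontr)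
      assume "\<not> ?c / real n < e"
      with p(2) have "1 / real p \<le> ?c / real n" by linarith
      then have "real n * (1 / real p) \<le> real n * (?c / real n)"
        by (rule mult_left_mono) simp
      with elim(2) have "real n / real p \<le> ?c" by simp
      then have "f (real n) \<le> real p * f ?c"
        using modulus_le_mult_of_ge_div[OF m p(1)] by simp
      moreover have "f (real n) > 0" using modulus_pos[OF m] elim(2) by simp
      ultimately have "1 / real p \<le> f ?c / f (real n)" using p(1) by (simp add: field_simps)
      with elim(1) show False by simp
    qed
  qed
qed

lemma f_stat_convergent_imp_stat_convergent:
  assumes "modulus f" "f_stat_convergent f x l"
  shows "stat_convergent x l"
  using assms f_density_zero_imp_nat_density_zero
  unfolding stat_convergent_def f_stat_convergent_def by blast

theorem theorem2p1:
  fixes f :: "real \<Rightarrow> real"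
    and As :: "nat \<Rightarrow> 'a::metric_space set"
    and A :: "'a set"
  assumes "unbounded_modulus f"
    and "A \<in> CL"
    and "\<forall>k. As k \<in> CL"
    and "f_wijsman_stat_convergent f As A"
  shows "wijsman_stat_convergent As A"
proof -
  have "modulus f" using assms(1) unfolding unbounded_modulus_def by simp
  with assms(4) show ?thesis
    unfolding wijsman_stat_convergent_def f_wijsman_stat_convergent_def
    by (simp add: f_stat_convergent_imp_stat_convergent)
qed

end
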